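(* Under Assumption 1 and the partition setting of the context, the optimal value of the convex relaxation (R) equals the optimal value of the convex relaxation (R'): $\min\ \sum_{h\in H}d_h^*w_h+\sum_{h\in H}\sum_{j\in N_h}(D_{jj}-d_h^* )x_j^2+2\sum_{h\in H}\sum_{j\in N_h}c_jx_j$ subject to $\sum_{h\in H}\xi^{ih}w_h+2\sum_{h\in H}\sum_{j\in N_h}a_{ij}x_j\le b_i$ ($i\in M$) and $\sum_{j\in N_h}x_j^2\le w_h$ ($h\in H$), over ${\bf x}\in\mathbb{R}^n$, ${\bf w}\in\mathbb{R}^{H}$. Consequently the optimal value of (R') also equals that of the Shor relaxation (S).
   Context: Let $N=\{1,\dots,n\}$ and $M=\{1,\dots,m\}$. Let ${\bf D}$ and ${\bf A}^i$ ($i\in M$) be real diagonal $n\times n$ matrices, ${\bf c},{\bf a}_i\in\mathbb{R}^n$ ($a_{ij}$ denotes the $j$-th entry of ${\bf a}_i$) and $b_i\in\mathbb{R}$. The diagonal QCQP is (P): $c^\star=\inf\{{\bf x}^\top{\bf D}{\bf x}+2{\bf c}^\top{\bf x} : {\bf x}^\top{\bf A}^i{\bf x}+2{\bf a}_i^\top{\bf x}\le b_i,\ i\in M\}$. Its Shor relaxation is (S): $v^\star=\inf\{{\bf D}\bullet{\bf X}+2{\bf c}^\top{\bf x} : {\bf A}^i\bullet{\bf X}+2{\bf a}_i^\top{\bf x}\le b_i\ (i\in M),\ {\bf X}-{\bf x}{\bf x}^\top\succeq {\bf O}\}$, where ${\bf P}\bullet{\bf Q}=\mathrm{trace}({\bf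 P}{\bf Q})$. The convex relaxation is (R): $p^\star=\inf\{\sum_{j\in N}D_{jj}z_j+2\sum_{j\in N}c_jx_j : \sum_{j\in N}A^i_{jj}z_j+2\sum_{j\in N}a_{ij}x_j\le b_i\ (i\in M),\ x_j^2\le z_j\ (j\in N)\}$. Assumption 1: (i) the feasible region of (P) is nonempty; (ii) there exists $\bar{\bf y}\ge 0$ with $\sum_{i\in M}\bar y_i{\bf A}^i\succ{\bf O}$; (iii) the feasible region of (S) has nonempty interior. Partition setting: $\{N_h\}_{h\in H}$ is a partition of $N$ such that for each $h\in H$ and $i\in M$ there is a number $\xi^{ih}$ with $A^i_{jj}=\xi^{ih}$ for all $j\in N_h$. For each $h\in H$, $d_h^*=\min_{j\in N_h}D_{jj}$ and it is assumed that this minimum is attained at a unique index $j_h\in N_h$. *)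

theory Defs
  imports "HOL-Analysis.Analysis"
begin

text \<open>Vectors in R^n are functions nat => real, only the entries indexed by
  N = {1..n} matter. n x n matrices are functions nat => nat => real restricted to N.
  The diagonal matrices D, A^i are given by their diagonal entries.\<close>

definition diag_mat :: "(nat \<Rightarrow> real) \<Rightarrow> nat \<Rightarrow> nat \<Rightarrow> real" where
  "diag_mat d = (\<lambda>i j. if i = j then d i else 0)"

definition mat_sym :: "nat set \<Rightarrow> (nat \<Rightarrow> nat \<Rightarrow> real) \<Rightarrow> bool" where
  "mat_sym I X \<longleftrightarrow> (\<forall>i\<in>I. \<forall>j\<in>I. X i j = X j i)"

definition mat_psd :: "nat set \<Rightarrow> (nat \<Rightarrow> nat \<Rightarrow> real) \<Rightarrow> bool" where
  "mat_psd I X \<longleftrightarrow> mat_sym I X \<and>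
     (\<forall>v::nat \<Rightarrow> real. (\<Sum>i\<in>I. \<Sum>j\<in>I. v i * X i j * v j) \<ge> 0)"

definition mat_pd :: "nat set \<Rightarrow> (nat \<Rightarrow> nat \<Rightarrow> real) \<Rightarrow> bool" where
  "mat_pd I X \<longleftrightarrow> mat_sym I X \<and>
     (\<forall>v::nat \<Rightarrow> real. (\<exists>i\<in>I. v i \<noteq> 0) \<longrightarrow> (\<Sum>i\<in>I. \<Sum>j\<in>I. v i * X i j * v j) > 0)"

definition mat_dot :: "nat set \<Rightarrow> (nat \<Rightarrow> nat \<Rightarrow> real) \<Rightarrow> (nat \<Rightarrow> nat \<Rightarrow> real) \<Rightarrow> real" where
  "mat_dot I P Q = (\<Sum>i\<in>I. \<Sum>j\<in>I. P i j * Q j i)"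

text \<open>Feasible region of (P). A i j = A^i_jj, a i j = a_ij.\<close>
definition feas_P :: "nat \<Rightarrow> nat \<Rightarrow> (nat \<Rightarrow> nat \<Rightarrow> real) \<Rightarrow> (nat \<Rightarrow> nat \<Rightarrow> real)
    \<Rightarrow> (nat \<Rightarrow> real) \<Rightarrow> (nat \<Rightarrow> real) set" where
  "feas_P n m A a b = {x. \<forall>i\<in>{1..m}.
      (\<Sum>j\<in>{1..n}. A i j * x j ^ 2) + 2 * (\<Sum>j\<in>{1..n}. a i j * x j) \<le> b i}"

definition feas_S :: "nat \<Rightarrow> nat \<Rightarrow> (nat \<Rightarrow> nat \<Rightarrow> real) \<Rightarrow> (nat \<Rightarrow> nat \<Rightarrow> real)
    \<Rightarrow> (nat \<Rightarrow> real) \<Rightarrow> ((nat \<Rightarrow> real) \<times> (nat \<Rightarrow> nat \<Rightarrow> real)) set" where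
  "feas_S n m A a b = {(x, X).
      (\<forall>i\<in>{1..m}. mat_dot {1..n} (diag_mat (A i)) X + 2 * (\<Sum>j\<in>{1..n}. a i j * x j) \<le> b i)
      \<and> mat_psd {1..n} (\<lambda>k l. X k l - x k * x l)}"

text \<open>Nonempty interior of the feasible region of (S), in the space
  R^n \<times> (symmetric n x n matrices) (topology via entrywise max-norm).\<close>
definition S_nonempty_interior :: "nat \<Rightarrow> nat \<Rightarrow> (nat \<Rightarrow> nat \<Rightarrow> real) \<Rightarrow> (nat \<Rightarrow> nat \<Rightarrow> real)
    \<Rightarrow> (nat \<Rightarrow> real) \<Rightarrow> bool" where
  "S_nonempty_interior n m A a b \<longleftrightarrow>
     (\<exists>x0 X0 (e::real). e > 0 \<and> mat_sym {1..n} X0 \<and>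
        (\<forall>x X. mat_sym {1..n} X \<and> (\<forall>j\<in>{1..n}. \<bar>x j - x0 j\<bar> < e)
           \<and> (\<forall>k\<in>{1..n}. \<forall>l\<in>{1..n}. \<bar>X k l - X0 k l\<bar> < e)
           \<longrightarrow> (x, X) \<in> feas_S n m A a b))"

definition val_S :: "nat \<Rightarrow> nat \<Rightarrow> (nat \<Rightarrow> real) \<Rightarrow> (nat \<Rightarrow> real) \<Rightarrow> (nat \<Rightarrow> nat \<Rightarrow> real)
    \<Rightarrow> (nat \<Rightarrow> nat \<Rightarrow> real) \<Rightarrow> (nat \<Rightarrow> real) \<Rightarrow> ereal" where
  "val_S n m D c A a b = Inf ((\<lambda>(x, X). ereal (mat_dot {1..n} (diag_mat D) X
        + 2 * (\<Sum>j\<in>{1..n}. c j * x j))) ` feas_S n m A a b)"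

definition val_R :: "nat \<Rightarrow> nat \<Rightarrow> (nat \<Rightarrow> real) \<Rightarrow> (nat \<Rightarrow> real) \<Rightarrow> (nat \<Rightarrow> nat \<Rightarrow> real)
    \<Rightarrow> (nat \<Rightarrow> nat \<Rightarrow> real) \<Rightarrow> (nat \<Rightarrow> real) \<Rightarrow> ereal" where
  "val_R n m D c A a b = Inf ((\<lambda>(x, z). ereal ((\<Sum>j\<in>{1..n}. D j * z j)
        + 2 * (\<Sum>j\<in>{1..n}. c j * x j))) `
     {(x, z). (\<forall>i\<in>{1..m}. (\<Sum>j\<in>{1..n}. A i j * z j) + 2 * (\<Sum>j\<in>{1..n}. a i j * x j) \<le> b i)
        \<and> (\<forall>j\<in>{1..n}. x j ^ 2 \<le> z j)})"

text \<open>Optimal value of the convex relaxation (R'), for the partition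
  Np h (h \<in> H), with \<xi> i h the common value of A^i_jj on Np h,
  and d* h = min of D_jj over Np h.\<close>
definition val_R' :: "nat \<Rightarrow> nat \<Rightarrow> 'h set \<Rightarrow> ('h \<Rightarrow> nat set) \<Rightarrow> (nat \<Rightarrow> 'h \<Rightarrow> real)
    \<Rightarrow> (nat \<Rightarrow> real) \<Rightarrow> (nat \<Rightarrow> real) \<Rightarrow> (nat \<Rightarrow> nat \<Rightarrow> real) \<Rightarrow> (nat \<Rightarrow> real) \<Rightarrow> ereal" where
  "val_R' n m H Np \<xi> D c a b = Inf ((\<lambda>(x, w). ereal (
        (\<Sum>h\<in>H. Min (D ` Np h) * w h)
        + (\<Sum>h\<in>H. \<Sum>j\<in>Np h. (D j - Min (D ` Np h)) * x j ^ 2)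
        + 2 * (\<Sum>h\<in>H. \<Sum>j\<in>Np h. c j * x j))) `
     {(x, w). (\<forall>i\<in>{1..m}. (\<Sum>h\<in>H. \<xi> i h * w h) + 2 * (\<Sum>h\<in>H. \<Sum>j\<in>Np h. a i j * x j) \<le> b i)
        \<and> (\<forall>h\<in>H. (\<Sum>j\<in>Np h. x j ^ 2) \<le> w h)})"

end

theory Submission
  imports Defs
begin

text \<open>With diagonal data the Shor relaxation only sees the diagonal z of X, and
  X - x x' \<succeq> 0 forces x_j^2 \<le> z_j; conversely X = x x' + Diag(z - x^2) lifts every
  feasible point of (R), so (S) and (R) have the same feasible values.
  A point of (R) gives a point of (R') by summing z over each block N_h, which can only
  lower the objective because d*_h \<le> D_jj on N_h. Conversely, take z_j = x_j^2 and put the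
  whole slack of block h, w_h - (\<Sum>j\<in>N_h. x_j^2), on an index where D is minimal on N_h:
  this reproduces the objective of (R') exactly.\<close>

lemma mat_psd_diag_nonneg:
  assumes "mat_psd I Y" "finite I" "i \<in> I"
  shows "0 \<le> Y i i"
proof -
  let ?e = "\<lambda>k. if k = i then 1 else 0 :: real"
  have "0 \<le> (\<Sum>k\<in>I. \<Sum>l\<in>I. ?e k * Y k l * ?e l)"
    using assms(1) unfolding mat_psd_def by (auto dest: spec[where x = ?e])
  also have "\<dots> = Y i i"
  proof -
    have "?e k * Y k l * ?e l = (if l = i then if k = i then Y i i else 0 else 0)" for k l
      by simp
    then show ?thesis
      using assms(2,3) by simp
  qed
  finally show ?thesis .
qed

lemma mat_psd_diag_mat:
  assumes "finite I" "\<forall>i\<in>I. 0 \<le> d i"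
  shows "mat_psd I (diag_mat d)"
proof -
  have "v i * diag_mat d i j * v j = (if j = i then d i * v i ^ 2 else 0)" for v i j
    by (simp add: diag_mat_def power2_eq_square)
  then have "(\<Sum>i\<in>I. \<Sum>j\<in>I. v i * diag_mat d i j * v j) = (\<Sum>i\<in>I. d i * v i ^ 2)" for v
    using assms(1) by simp
  then show ?thesis
    using assms(2) unfolding mat_psd_def mat_sym_def diag_mat_def by (auto intro: sum_nonneg)
qed

lemma mat_dot_diag_mat:
  assumes "finite I"
  shows "mat_dot I (diag_mat d) X = (\<Sum>i\<in>I. d i * X i i)"
  using assms unfolding mat_dot_def diag_mat_def
  by (simp add: if_distrib[where f="\<lambda>t. t * _"] cong: if_cong)

definition feas_R :: "nat \<Rightarrow> nat \<Rightarrow> (nat \<Rightarrow> nat \<Rightarrow> real) \<Rightarrow> (nat \<Rightarrow> nat \<Rightarrow> real)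
    \<Rightarrow> (nat \<Rightarrow> real) \<Rightarrow> ((nat \<Rightarrow> real) \<times> (nat \<Rightarrow> real)) set" where
  "feas_R n m A a b = {(x, z).
      (\<forall>i\<in>{1..m}. (\<Sum>j\<in>{1..n}. A i j * z j) + 2 * (\<Sum>j\<in>{1..n}. a i j * x j) \<le> b i)
      \<and> (\<forall>j\<in>{1..n}. x j ^ 2 \<le> z j)}"

definition obj_R :: "nat \<Rightarrow> (nat \<Rightarrow> real) \<Rightarrow> (nat \<Rightarrow> real) \<Rightarrow> (nat \<Rightarrow> real) \<Rightarrow> (nat \<Rightarrow> real) \<Rightarrow> real" where
  "obj_R n D c x z = (\<Sum>j\<in>{1..n}. D j * z j) + 2 * (\<Sum>j\<in>{1..n}. c j * x j)"

lemma val_R_eq_INF: "val_R n m D c A a b = (INF (x, z)\<in>feas_R n m A a b. ereal (obj_R n D c x z))"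
  unfolding val_R_def feas_R_def obj_R_def ..

lemma val_S_eq_INF_diagonal:
  "val_S n m D c A a b = (INF (x, X)\<in>feas_S n m A a b. ereal (obj_R n D c x (\<lambda>j. X j j)))"
  unfolding val_S_def obj_R_def by (simp add: mat_dot_diag_mat)

lemma diagonal_feas_S_eq_feas_R:
  "(\<lambda>(x, X). (x, \<lambda>j. X j j)) ` feas_S n m A a b = feas_R n m A a b"
proof (intro equalityI subsetI)
  fix p assume "p \<in> (\<lambda>(x, X). (x, \<lambda>j. X j j)) ` feas_S n m A a b"
  then obtain x X where p: "p = (x, \<lambda>j. X j j)" and S: "(x, X) \<in> feas_S n m A a b"
    by auto
  have "0 \<le> X j j - x j * x j" if "j \<in> {1..n}" for j
    using mat_psd_diag_nonneg[of "{1..n}" "\<lambda>k l. X k l - x k * x l"] S that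
    by (simp add: feas_S_def)
  then show "p \<in> feas_R n m A a b"
    using S by (auto simp: p feas_S_def feas_R_def mat_dot_diag_mat power2_eq_square)
next
  fix p assume "p \<in> feas_R n m A a b"
  then obtain x z where p: "p = (x, z)" and R: "(x, z) \<in> feas_R n m A a b"
    by (cases p) auto
  define X where "X k l = x k * x l + diag_mat (\<lambda>j. z j - x j ^ 2) k l" for k l
  have diag: "(\<lambda>j. X j j) = z"
    by (auto simp: X_def diag_mat_def power2_eq_square)
  have "mat_psd {1..n} (\<lambda>k l. X k l - x k * x l)"
    using R by (simp add: X_def feas_R_def mat_psd_diag_mat)
  then have "(x, X) \<in> feas_S n m A a b"
    using R by (simp add: feas_S_def feas_R_def mat_dot_diag_mat diag[unfolded fun_eq_iff])
  then show "p \<in> (\<lambda>(x, X). (x, \<lambda>j. X j j)) ` feas_S n m A a b"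
    using diag p by force
qed

lemma val_R_eq_val_S: "val_R n m D c A a b = val_S n m D c A a b"
  by (simp add: val_R_eq_INF val_S_eq_INF_diagonal image_image case_prod_beta
      flip: diagonal_feas_S_eq_feas_R)

lemma weighted_sum_ge_split:
  fixes d x z :: "'a \<Rightarrow> real"
  assumes "\<forall>j\<in>J. \<mu> \<le> d j" and "\<forall>j\<in>J. x j ^ 2 \<le> z j"
  shows "\<mu> * sum z J + (\<Sum>j\<in>J. (d j - \<mu>) * x j ^ 2) \<le> (\<Sum>j\<in>J. d j * z j)"
proof -
  have "\<mu> * z j + (d j - \<mu>) * x j ^ 2 \<le> d j * z j" if "j \<in> J" for j
  proof -
    have "0 \<le> (d j - \<mu>) * (z j - x j ^ 2)"
      using assms that by simp
    then show ?thesis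
      by (simp add: algebra_simps)
  qed
  then have "(\<Sum>j\<in>J. \<mu> * z j + (d j - \<mu>) * x j ^ 2) \<le> (\<Sum>j\<in>J. d j * z j)"
    by (rule sum_mono)
  then show ?thesis
    by (simp add: sum.distrib sum_distrib_left)
qed

lemma weighted_sum_slack_at:
  fixes d x z :: "'a \<Rightarrow> real"
  assumes "finite J" "j\<^sub>0 \<in> J" and z: "\<forall>j\<in>J. z j = x j ^ 2 + (if j = j\<^sub>0 then s else 0)"
  shows "sum z J = (\<Sum>j\<in>J. x j ^ 2) + s"
    and "(\<Sum>j\<in>J. d j * z j) = d j\<^sub>0 * sum z J + (\<Sum>j\<in>J. (d j - d j\<^sub>0) * x j ^ 2)"
proof -
  have "sum z J = (\<Sum>j\<in>J. x j ^ 2 + (if j = j\<^sub>0 then s else 0))"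
    using z by (intro sum.cong) auto
  then show sum_z: "sum z J = (\<Sum>j\<in>J. x j ^ 2) + s"
    using assms(1,2) by (simp add: sum.distrib)
  have "(\<Sum>j\<in>J. d j * z j) = (\<Sum>j\<in>J. d j * x j ^ 2 + (if j = j\<^sub>0 then d j\<^sub>0 * s else 0))"
    using z by (intro sum.cong) (auto simp: algebra_simps)
  also have "\<dots> = (\<Sum>j\<in>J. d j * x j ^ 2) + d j\<^sub>0 * s"
    using assms(1,2) by (simp add: sum.distrib)
  finally show "(\<Sum>j\<in>J. d j * z j) = d j\<^sub>0 * sum z J + (\<Sum>j\<in>J. (d j - d j\<^sub>0) * x j ^ 2)"
    by (simp add: sum_z algebra_simps sum_subtractf sum_distrib_left)
qed

locale index_partition =
  fixes H :: "'h set" and B :: "'h \<Rightarrow> 'a set" and I :: "'a set"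
  assumes finite_H: "finite H" and finite_I: "finite I"
    and disjoint: "\<And>h h'. h \<in> H \<Longrightarrow> h' \<in> H \<Longrightarrow> h \<noteq> h' \<Longrightarrow> B h \<inter> B h' = {}"
    and cover: "(\<Union>h\<in>H. B h) = I"
begin

lemma block_subset: "h \<in> H \<Longrightarrow> B h \<subseteq> I"
  using cover by blast

lemma finite_block: "h \<in> H \<Longrightarrow> finite (B h)"
  using block_subset finite_I finite_subset by blast

lemma sum_blocks: "sum f I = (\<Sum>h\<in>H. sum f (B h))"
  using sum.UNION_disjoint[of H B f] finite_H finite_block disjoint cover by auto

lemma sum_blockwise_constant:
  fixes f z :: "'a \<Rightarrow> real" and g :: "'h \<Rightarrow> real"
  assumes "\<forall>h\<in>H. \<forall>j\<in>B h. f j = g h"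
  shows "(\<Sum>j\<in>I. f j * z j) = (\<Sum>h\<in>H. g h * sum z (B h))"
proof -
  have "(\<Sum>j\<in>I. f j * z j) = (\<Sum>h\<in>H. \<Sum>j\<in>B h. g h * z j)"
    unfolding sum_blocks using assms by (intro sum.cong) auto
  then show ?thesis
    by (simp add: sum_distrib_left)
qed

definition block_of :: "'a \<Rightarrow> 'h" where
  "block_of j = (THE h. h \<in> H \<and> j \<in> B h)"

lemma obtain_block:
  assumes "j \<in> I"
  obtains h where "h \<in> H" "j \<in> B h"
  using assms unfolding cover[symmetric] by blast

lemma block_of_eq: "h \<in> H \<Longrightarrow> j \<in> B h \<Longrightarrow> block_of j = h"
  unfolding block_of_def using disjoint by blast

end

definition feas_R' :: "nat \<Rightarrow> 'h set \<Rightarrow> ('h \<Rightarrow> nat set) \<Rightarrow> (nat \<Rightarrow> 'h \<Rightarrow> real)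
    \<Rightarrow> (nat \<Rightarrow> nat \<Rightarrow> real) \<Rightarrow> (nat \<Rightarrow> real) \<Rightarrow> ((nat \<Rightarrow> real) \<times> ('h \<Rightarrow> real)) set" where
  "feas_R' m H Np \<xi> a b = {(x, w).
      (\<forall>i\<in>{1..m}. (\<Sum>h\<in>H. \<xi> i h * w h) + 2 * (\<Sum>h\<in>H. \<Sum>j\<in>Np h. a i j * x j) \<le> b i)
      \<and> (\<forall>h\<in>H. (\<Sum>j\<in>Np h. x j ^ 2) \<le> w h)}"

definition obj_R' :: "'h set \<Rightarrow> ('h \<Rightarrow> nat set) \<Rightarrow> (nat \<Rightarrow> real) \<Rightarrow> (nat \<Rightarrow> real)
    \<Rightarrow> (nat \<Rightarrow> real) \<Rightarrow> ('h \<Rightarrow> real) \<Rightarrow> real" where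
  "obj_R' H Np D c x w = (\<Sum>h\<in>H. Min (D ` Np h) * w h)
      + (\<Sum>h\<in>H. \<Sum>j\<in>Np h. (D j - Min (D ` Np h)) * x j ^ 2)
      + 2 * (\<Sum>h\<in>H. \<Sum>j\<in>Np h. c j * x j)"

lemma val_R'_eq_INF:
  "val_R' n m H Np \<xi> D c a b = (INF (x, w)\<in>feas_R' m H Np \<xi> a b. ereal (obj_R' H Np D c x w))"
  unfolding val_R'_def feas_R'_def obj_R'_def ..

lemma val_R'_le_val_R:
  assumes part: "index_partition H Np {1..n}"
    and xi: "\<forall>h\<in>H. \<forall>i\<in>{1..m}. \<forall>j\<in>Np h. A i j = \<xi> i h"
  shows "val_R' n m H Np \<xi> D c a b \<le> val_R n m D c A a b"
  unfolding val_R_eq_INF val_R'_eq_INF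
proof (rule INF_mono)
  interpret index_partition H Np "{1..n}" by (fact part)
  fix p assume "p \<in> feas_R n m A a b"
  then obtain x z where p: "p = (x, z)" and R: "(x, z) \<in> feas_R n m A a b"
    by (cases p) auto
  define w where "w h = sum z (Np h)" for h
  have x_sq_le: "\<forall>j\<in>Np h. x j ^ 2 \<le> z j" if "h \<in> H" for h
    using R block_subset[OF that] by (auto simp: feas_R_def)
  have "(\<Sum>j\<in>{1..n}. A i j * z j) = (\<Sum>h\<in>H. \<xi> i h * w h)" if "i \<in> {1..m}" for i
    unfolding w_def using xi that by (intro sum_blockwise_constant) auto
  then have "(x, w) \<in> feas_R' m H Np \<xi> a b"
    using R x_sq_le
    by (auto simp: feas_R_def feas_R'_def w_def sum_blocks[symmetric] intro: sum_mono)
  moreover have "obj_R' H Np D c x w \<le> obj_R n D c x z"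
  proof -
    have "(\<Sum>h\<in>H. Min (D ` Np h) * w h + (\<Sum>j\<in>Np h. (D j - Min (D ` Np h)) * x j ^ 2))
        \<le> (\<Sum>h\<in>H. \<Sum>j\<in>Np h. D j * z j)"
      using x_sq_le finite_block unfolding w_def
      by (intro sum_mono weighted_sum_ge_split) auto
    then show ?thesis
      unfolding obj_R'_def obj_R_def sum_blocks by (simp add: sum.distrib)
  qed
  ultimately show "\<exists>q\<in>feas_R' m H Np \<xi> a b. (\<lambda>(x, w). ereal (obj_R' H Np D c x w)) q
      \<le> (\<lambda>(x, z). ereal (obj_R n D c x z)) p"
    unfolding p by force
qed

lemma arg_min_on_Min:
  fixes f :: "'a \<Rightarrow> 'b::linorder"
  assumes "finite S" "S \<noteq> {}"
  shows "arg_min_on f S \<in> S" and "f (arg_min_on f S) = Min (f ` S)"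
  using assms by (auto intro!: Min_eqI[symmetric] arg_min_if_finite(1) arg_min_least)

lemma val_R_le_val_R':
  assumes part: "index_partition H Np {1..n}"
    and nonempty: "\<forall>h\<in>H. Np h \<noteq> {}"
    and xi: "\<forall>h\<in>H. \<forall>i\<in>{1..m}. \<forall>j\<in>Np h. A i j = \<xi> i h"
  shows "val_R n m D c A a b \<le> val_R' n m H Np \<xi> D c a b"
  unfolding val_R_eq_INF val_R'_eq_INF
proof (rule INF_mono)
  interpret index_partition H Np "{1..n}" by (fact part)
  fix p assume "p \<in> feas_R' m H Np \<xi> a b"
  then obtain x w where p: "p = (x, w)" and R': "(x, w) \<in> feas_R' m H Np \<xi> a b"
    by (cases p) auto
  define j_min where "j_min h = arg_min_on D (Np h)" for h
  define s where "s h = w h - (\<Sum>j\<in>Np h. x j ^ 2)" for h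
  define z where "z j = x j ^ 2 + (if j = j_min (block_of j) then s (block_of j) else 0)" for j
  have j_min: "j_min h \<in> Np h" "D (j_min h) = Min (D ` Np h)" if "h \<in> H" for h
    unfolding j_min_def using finite_block[OF that] nonempty that by (simp_all add: arg_min_on_Min)
  have z_block: "\<forall>j\<in>Np h. z j = x j ^ 2 + (if j = j_min h then s h else 0)" if "h \<in> H" for h
    using that by (simp add: z_def block_of_eq)
  have sum_z: "sum z (Np h) = w h" if "h \<in> H" for h
    using weighted_sum_slack_at(1)[OF finite_block j_min(1) z_block] that by (simp add: s_def)
  have "(\<Sum>j\<in>{1..n}. A i j * z j) = (\<Sum>h\<in>H. \<xi> i h * w h)" if "i \<in> {1..m}" for i
  proof -
    have "(\<Sum>j\<in>{1..n}. A i j * z j) = (\<Sum>h\<in>H. \<xi> i h * sum z (Np h))"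
      using xi that by (intro sum_blockwise_constant) auto
    also have "\<dots> = (\<Sum>h\<in>H. \<xi> i h * w h)"
      by (rule sum.cong[OF refl]) (simp add: sum_z)
    finally show ?thesis .
  qed
  moreover have "x j ^ 2 \<le> z j" if j: "j \<in> {1..n}" for j
  proof -
    from j obtain h where "h \<in> H" "j \<in> Np h"
      by (rule obtain_block)
    moreover have "0 \<le> s h" if "h \<in> H"
      using R' that by (simp add: feas_R'_def s_def)
    ultimately show ?thesis
      using z_block by auto
  qed
  ultimately have "(x, z) \<in> feas_R n m A a b"
    using R' unfolding feas_R_def feas_R'_def sum_blocks by auto
  moreover have "obj_R n D c x z = obj_R' H Np D c x w"
  proof -
    have "(\<Sum>j\<in>Np h. D j * z j)
        = Min (D ` Np h) * w h + (\<Sum>j\<in>Np h. (D j - Min (D ` Np h)) * x j ^ 2)" if "h \<in> H" for h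
      using weighted_sum_slack_at(2)[OF finite_block j_min(1) z_block] j_min(2) sum_z that by simp
    then show ?thesis
      unfolding obj_R_def obj_R'_def sum_blocks by (simp add: sum.distrib)
  qed
  ultimately show "\<exists>q\<in>feas_R n m A a b. (\<lambda>(x, z). ereal (obj_R n D c x z)) q
      \<le> (\<lambda>(x, w). ereal (obj_R' H Np D c x w)) p"
    unfolding p by force
qed

lemma val_R_eq_val_R':
  assumes "index_partition H Np {1..n}"
    and "\<forall>h\<in>H. Np h \<noteq> {}"
    and "\<forall>h\<in>H. \<forall>i\<in>{1..m}. \<forall>j\<in>Np h. A i j = \<xi> i h"
  shows "val_R n m D c A a b = val_R' n m H Np \<xi> D c a b"
  using assms by (intro antisym val_R_le_val_R' val_R'_le_val_R)

theorem proposition2: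
  fixes n m :: nat
    and D c :: "nat \<Rightarrow> real"
    and A a :: "nat \<Rightarrow> nat \<Rightarrow> real"
    and b :: "nat \<Rightarrow> real"
    and H :: "'h set" and Np :: "'h \<Rightarrow> nat set" and \<xi> :: "nat \<Rightarrow> 'h \<Rightarrow> real"
  assumes A1_i: "feas_P n m A a b \<noteq> {}"
    and A1_ii: "\<exists>y::nat \<Rightarrow> real. (\<forall>i\<in>{1..m}. y i \<ge> 0) \<and>
                  mat_pd {1..n} (\<lambda>k l. \<Sum>i\<in>{1..m}. y i * diag_mat (A i) k l)"
    and A1_iii: "S_nonempty_interior n m A a b"
    and fin_H: "finite H"
    and part_ne: "\<forall>h\<in>H. Np h \<noteq> {}"
    and part_disj: "\<forall>h\<in>H. \<forall>h'\<in>H. h \<noteq> h' \<longrightarrow> Np h \<inter> Np h' = {}"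
    and part_cover: "(\<Union>h\<in>H. Np h) = {1..n}"
    and xi: "\<forall>h\<in>H. \<forall>i\<in>{1..m}. \<forall>j\<in>Np h. A i j = \<xi> i h"
    and uniq_min: "\<forall>h\<in>H. \<exists>!j. j \<in> Np h \<and> D j = Min (D ` Np h)"
  shows "val_R n m D c A a b = val_R' n m H Np \<xi> D c a b
       \<and> val_R' n m H Np \<xi> D c a b = val_S n m D c A a b"
proof -
  have "index_partition H Np {1..n}"
    using fin_H part_disj part_cover by unfold_locales auto
  then have "val_R n m D c A a b = val_R' n m H Np \<xi> D c a b"
    using part_ne xi by (rule val_R_eq_val_R')
  then show ?thesis
    using val_R_eq_val_S by simp
qed

end
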